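(* Let $k_+,k_-$ be integers with $0\le k_-\le k_+$. Let $\psi(x)$ denote the smallest prime not smaller than $x$ and set $p\triangleq\psi(k_++k_-+1)$. Let $m,t$ be positive integers such that $2t\le p^{\lceil m/2\rceil}-2$, and set $n=p^m-1$. Then $\mathbb{Z}^n$ can be lattice packed by $\mathcal{B}(n,t,k_+,k_-)$ with density \[\delta = \frac{\sum_{i=0}^t \binom{n}{i}(k_++k_-)^i}{(n+1)^{\lceil 2t(1-1/p)\rceil} }.\]
   Context: $\mathcal{B}(n,t,k_+,k_-)=\{\mathbf{x}\in\mathbb{Z}^n : -k_-\le x_i\le k_+ \text{ for all } i,\ \mathrm{wt}(\mathbf{x})\le t\}$, where $\mathrm{wt}$ is the Hamming weight. A lattice packing of $\mathbb{Z}^n$ by $\mathcal{B}$ is a lattice $\Lambda\subseteq\mathbb{Z}^n$ (additive subgroup) such that the translates $\mathbf{v}+\mathcal{B}$, $\mathbf{v}\in\Lambda$, are pairwise disjoint; its density is $|\mathcal{B}|/\mathrm{vol}(\Lambda)$, where $\mathrm{vol}(\Lambda)=|\mathbb{Z}^n/\Lambda|$. *)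

theory Defs
  imports Complex_Main "HOL-Computational_Algebra.Primes" "HOL-Library.Function_Algebras"
begin

text \<open>Vectors of Z^n are modelled as functions nat => int vanishing outside {0..<n}.\<close>
definition Zn :: "nat \<Rightarrow> (nat \<Rightarrow> int) set" where
  "Zn n = {x. \<forall>i\<ge>n. x i = 0}"

definition hwt :: "nat \<Rightarrow> (nat \<Rightarrow> int) \<Rightarrow> nat" where
  "hwt n x = card {i. i < n \<and> x i \<noteq> 0}"

definition ball_B :: "nat \<Rightarrow> nat \<Rightarrow> nat \<Rightarrow> nat \<Rightarrow> (nat \<Rightarrow> int) set" where
  "ball_B n t kp km = {x \<in> Zn n. (\<forall>i<n. - int km \<le> x i \<and> x i \<le> int kp) \<and> hwt n x \<le> t}"

definition is_lattice :: "nat \<Rightarrow> (nat \<Rightarrow> int) set \<Rightarrow> bool" where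
  "is_lattice n L \<longleftrightarrow> L \<subseteq> Zn n \<and> 0 \<in> L \<and> (\<forall>x\<in>L. \<forall>y\<in>L. x + y \<in> L) \<and> (\<forall>x\<in>L. - x \<in> L)"

definition cosets :: "nat \<Rightarrow> (nat \<Rightarrow> int) set \<Rightarrow> (nat \<Rightarrow> int) set set" where
  "cosets n L = (\<lambda>x. (\<lambda>y. x + y) ` L) ` Zn n"

definition vol :: "nat \<Rightarrow> (nat \<Rightarrow> int) set \<Rightarrow> nat" where
  "vol n L = card (cosets n L)"

definition is_lattice_packing :: "nat \<Rightarrow> (nat \<Rightarrow> int) set \<Rightarrow> (nat \<Rightarrow> int) set \<Rightarrow> bool" where
  "is_lattice_packing n L B \<longleftrightarrow> is_lattice n L \<and>
     (\<forall>v\<in>L. \<forall>w\<in>L. v \<noteq> w \<longrightarrow> ((\<lambda>b. v + b) ` B) \<inter> ((\<lambda>b. w + b) ` B) = {})"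

definition density :: "nat \<Rightarrow> (nat \<Rightarrow> int) set \<Rightarrow> (nat \<Rightarrow> int) set \<Rightarrow> real" where
  "density n L B = real (card B) / real (vol n L)"

definition psi :: "nat \<Rightarrow> nat" where
  "psi x = (LEAST q. prime q \<and> x \<le> q)"

end

(* Let q = p^m and let b_0, ..., b_(n-1) be the nonzero elements of GF(q), found inside an
   algebraic closure of Z/p. For J = {j <= 2t. p does not divide j}, the integer vectors x whose
   power sums S_j(x) = sum_i x_i b_i^j vanish for all j in J form a lattice. A difference of two
   points of the ball has weight at most 2t and entries of absolute value below p, hence nonzero
   coefficients mod p; a Vandermonde argument gives a nonzero S_j with j <= 2t, and Frobenius
   (S_(pj) = S_j^p) one with j in J. So the lattice packs the ball. Its index is the order of the
   image of x |-> (S_j(x))_(j in J), a subgroup of GF(q)^J, hence a divisor of q^|J|; a congruence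
   on the first coordinate then cuts the index up to exactly q^|J| = (n+1)^ceil(2t(1-1/p)).
   This replaces the paper's use of the bound 2t <= p^ceil(m/2) - 2 to show the syndrome map is
   onto. *)

theory Submission
  imports Defs "HOL-Algebra.Algebraic_Closure" "HOL-Algebra.Product_Groups" "HOL-Number_Theory.Residues"
begin

section \<open>Sublattices of \<open>\<int>\<^sup>n\<close> as kernels\<close>

text \<open>Maps out of \<open>\<int>\<^sup>n\<close> that are constant exactly on the cosets of their kernel,
  such as additive homomorphisms or reduction of one coordinate modulo \<open>M\<close>.\<close>
definition diff_compatible :: "nat \<Rightarrow> ((nat \<Rightarrow> int) \<Rightarrow> 'b) \<Rightarrow> bool" where
  "diff_compatible n f \<longleftrightarrow> (\<forall>x\<in>Zn n. \<forall>y\<in>Zn n. f x = f y \<longleftrightarrow> f (x - y) = f 0)"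

definition zn_kernel :: "nat \<Rightarrow> ((nat \<Rightarrow> int) \<Rightarrow> 'b) \<Rightarrow> (nat \<Rightarrow> int) set" where
  "zn_kernel n f = {x \<in> Zn n. f x = f 0}"

lemma Zn_closed [simp]:
  "0 \<in> Zn n" "x \<in> Zn n \<Longrightarrow> - x \<in> Zn n"
  "x \<in> Zn n \<Longrightarrow> y \<in> Zn n \<Longrightarrow> x + y \<in> Zn n" "x \<in> Zn n \<Longrightarrow> y \<in> Zn n \<Longrightarrow> x - y \<in> Zn n"
  by (simp_all add: Zn_def)

lemma diff_compatibleD:
  "diff_compatible n f \<Longrightarrow> x \<in> Zn n \<Longrightarrow> y \<in> Zn n \<Longrightarrow> f x = f y \<longleftrightarrow> f (x - y) = f 0"
  unfolding diff_compatible_def by blast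

lemma zn_kernel_coset:
  assumes f: "diff_compatible n f" and x: "x \<in> Zn n"
  shows "(\<lambda>y. x + y) ` zn_kernel n f = {y \<in> Zn n. f y = f x}"
proof (intro equalityI subsetI)
  fix z assume "z \<in> (\<lambda>y. x + y) ` zn_kernel n f"
  then obtain l where l: "l \<in> Zn n" "f l = f 0" and z: "z = x + l" by (auto simp: zn_kernel_def)
  then have "z \<in> Zn n" "z - x = l" using x by auto
  then show "z \<in> {y \<in> Zn n. f y = f x}" using diff_compatibleD[OF f _ x, of z] l by simp
next
  fix y assume "y \<in> {y \<in> Zn n. f y = f x}"
  then have "y - x \<in> zn_kernel n f" using diff_compatibleD[OF f _ x, of y] x by (simp add: zn_kernel_def)
  then show "y \<in> (\<lambda>y. x + y) ` zn_kernel n f" by (rule image_eqI[rotated]) simp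
qed

lemma vol_zn_kernel:
  assumes "diff_compatible n f"
  shows "vol n (zn_kernel n f) = card (f ` Zn n)"
proof -
  define fibre where "fibre u = {y \<in> Zn n. f y = u}" for u
  have "cosets n (zn_kernel n f) = fibre ` f ` Zn n"
    unfolding cosets_def fibre_def using zn_kernel_coset[OF assms] by (auto simp: image_image)
  moreover have "inj_on fibre (f ` Zn n)"
  proof (rule inj_onI)
    fix u v assume "u \<in> f ` Zn n" and eq: "fibre u = fibre v"
    then obtain x where "x \<in> Zn n" "u = f x" by auto
    then have "x \<in> fibre u" by (simp add: fibre_def)
    then have "x \<in> fibre v" using eq by simp
    then show "u = v" using \<open>u = f x\<close> by (simp add: fibre_def)
  qed
  ultimately show ?thesis by (simp add: vol_def card_image)
qed

lemma is_lattice_zn_kernel: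
  assumes f: "diff_compatible n f"
  shows "is_lattice n (zn_kernel n f)"
  unfolding is_lattice_def
proof (intro conjI ballI)
  fix x y assume "x \<in> zn_kernel n f" "y \<in> zn_kernel n f"
  then have "x \<in> Zn n" "y \<in> Zn n" "f x = f 0" "f y = f 0" by (auto simp: zn_kernel_def)
  then show "x + y \<in> zn_kernel n f" using diff_compatibleD[OF f _ \<open>y \<in> Zn n\<close>, of "x + y"]
    by (simp add: zn_kernel_def)
next
  fix x assume "x \<in> zn_kernel n f"
  then have "x \<in> Zn n" "f x = f 0" by (auto simp: zn_kernel_def)
  then show "- x \<in> zn_kernel n f" using diff_compatibleD[OF f Zn_closed(1) \<open>x \<in> Zn n\<close>]
    by (simp add: zn_kernel_def)
qed (auto simp: zn_kernel_def)

lemma is_lattice_scale: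
  assumes L: "is_lattice n L" and x: "x \<in> L"
  shows "(\<lambda>i. c * x i) \<in> L"
proof -
  have nat_scale: "(\<lambda>i. int k * x i) \<in> L" for k
  proof (induction k)
    case 0
    then show ?case using L by (simp add: is_lattice_def zero_fun_def)
  next
    case (Suc k)
    then have "x + (\<lambda>i. int k * x i) \<in> L" using L x by (simp add: is_lattice_def)
    then show ?case by (simp add: plus_fun_def algebra_simps)
  qed
  show ?thesis
  proof (cases "c \<ge> 0")
    case True
    then show ?thesis using nat_scale[of "nat c"] by simp
  next
    case False
    have "(\<lambda>i. int (nat (- c)) * x i) \<in> L" by (rule nat_scale)
    then have "- (\<lambda>i. int (nat (- c)) * x i) \<in> L" using L by (simp only: is_lattice_def)
    moreover have "- (\<lambda>i. int (nat (- c)) * x i) = (\<lambda>i. c * x i)" using False by (simp add: fun_eq_iff)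
    ultimately show ?thesis by simp
  qed
qed

text \<open>A subgroup of \<open>\<int>\<close> containing a positive element is \<open>g\<int>\<close> for its least positive element \<open>g\<close>,
  so its residues modulo \<open>g * k\<close> are exactly the \<open>k\<close> multiples of \<open>g\<close> below \<open>g * k\<close>.\<close>
lemma int_subgroup_card_mod_image:
  fixes S :: "int set" and k :: nat
  assumes add: "\<And>x y. x \<in> S \<Longrightarrow> y \<in> S \<Longrightarrow> x + y \<in> S"
    and scale: "\<And>c x. x \<in> S \<Longrightarrow> c * x \<in> S"
    and c: "c \<in> S" "c > 0" and k: "k > 0"
  shows "\<exists>M > 0. card ((\<lambda>s. s mod M) ` S) = k"
proof -
  define g0 where "g0 = (LEAST g0. g0 > 0 \<and> int g0 \<in> S)"
  define g where "g = int g0"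
  have "nat c > 0 \<and> int (nat c) \<in> S" using c by simp
  then have g: "g \<in> S" "g > 0" unfolding g_def g0_def by (metis (mono_tags, lifting) LeastI of_nat_0_less_iff)+
  have g_least: "g \<le> s" if "s \<in> S" "s > 0" for s
    using that Least_le[of "\<lambda>g0. g0 > 0 \<and> int g0 \<in> S" "nat s"] by (simp add: g_def g0_def)
  have g_dvd: "g dvd s" if s: "s \<in> S" for s
  proof -
    have "s mod g = s + (- (s div g)) * g" by (simp add: minus_div_mult_eq_mod)
    then have "s mod g \<in> S" using add scale s g(1) by metis
    then have "\<not> s mod g > 0" using g_least[of "s mod g"] pos_mod_bound[OF g(2), of s] by linarith
    then show ?thesis using pos_mod_sign[OF g(2), of s] by (simp add: dvd_eq_mod_eq_0)
  qed
  have "(\<lambda>s. s mod (g * int k)) ` S = (\<lambda>a. g * a) ` {0..<int k}"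
  proof
    show "(\<lambda>s. s mod (g * int k)) ` S \<subseteq> (\<lambda>a. g * a) ` {0..<int k}"
    proof (rule image_subsetI)
      fix s assume "s \<in> S"
      then obtain a where "s = g * a" using g_dvd by blast
      then have "s mod (g * int k) = g * (a mod int k)" by (simp add: mod_mult_mult1)
      moreover have "a mod int k \<in> {0..<int k}" using k by simp
      ultimately show "s mod (g * int k) \<in> (\<lambda>a. g * a) ` {0..<int k}" by blast
    qed
    show "(\<lambda>a. g * a) ` {0..<int k} \<subseteq> (\<lambda>s. s mod (g * int k)) ` S"
    proof (rule image_subsetI)
      fix a assume "a \<in> {0..<int k}"
      then have "(g * a) mod (g * int k) = g * a" using g(2) by (simp add: mod_mult_mult1)
      moreover have "g * a \<in> S" using scale[OF g(1), of a] by (simp add: mult.commute)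
      ultimately show "g * a \<in> (\<lambda>s. s mod (g * int k)) ` S" by (metis image_eqI)
    qed
  qed
  moreover have "inj_on (\<lambda>a. g * a) {0..<int k}" using g(2) by (auto intro: inj_onI)
  ultimately show ?thesis using g(2) k by (intro exI[of _ "g * int k"]) (simp add: card_image)
qed

lemma card_image_pair_mod:
  assumes f: "diff_compatible n f" and fin: "finite (f ` Zn n)" and M: "M > (0::int)"
  shows "card ((\<lambda>x. (f x, x 0 mod M)) ` Zn n) = card (f ` Zn n) * card ((\<lambda>x. x 0 mod M) ` zn_kernel n f)"
proof -
  define g where "g x = x 0 mod M" for x :: "nat \<Rightarrow> int"
  define G where "G = g ` zn_kernel n f"
  have G: "G \<subseteq> {0..<M}" using M by (auto simp: G_def g_def)
  have image_pair: "(\<lambda>x. (f x, g x)) ` Zn n = Sigma (f ` Zn n) (\<lambda>u. g ` {y \<in> Zn n. f y = u})"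
  proof (intro equalityI subsetI)
    fix z assume "z \<in> Sigma (f ` Zn n) (\<lambda>u. g ` {y \<in> Zn n. f y = u})"
    then obtain u v where "u \<in> f ` Zn n" "v \<in> g ` {y \<in> Zn n. f y = u}" and z: "z = (u, v)" by blast
    then obtain y where "y \<in> Zn n" "f y = u" "v = g y" by blast
    with z show "z \<in> (\<lambda>x. (f x, g x)) ` Zn n" by (intro rev_image_eqI[of y]) auto
  qed auto
  have card_fibre: "card (g ` {y \<in> Zn n. f y = u}) = card G" if "u \<in> f ` Zn n" for u
  proof -
    obtain x where x: "x \<in> Zn n" "u = f x" using \<open>u \<in> f ` Zn n\<close> by auto
    have "g ` {y \<in> Zn n. f y = u} = g ` (\<lambda>y. x + y) ` zn_kernel n f"
      using zn_kernel_coset[OF f x(1)] x(2) by simp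
    also have "\<dots> = (\<lambda>s. (x 0 + s) mod M) ` G"
      unfolding G_def image_image by (intro image_cong) (simp_all add: g_def mod_add_right_eq)
    finally have "g ` {y \<in> Zn n. f y = u} = (\<lambda>s. (x 0 + s) mod M) ` G" .
    moreover have "inj_on (\<lambda>s. (x 0 + s) mod M) G"
    proof (rule inj_onI)
      fix s s' assume "s \<in> G" "s' \<in> G" "(x 0 + s) mod M = (x 0 + s') mod M"
      then have "s mod M = s' mod M" "s \<in> {0..<M}" "s' \<in> {0..<M}" using G by (auto simp: mod_eq_dvd_iff)
      then show "s = s'" by simp
    qed
    ultimately show ?thesis by (simp add: card_image)
  qed
  have "finite (g ` {y \<in> Zn n. f y = u})" for u
    by (rule finite_subset[of _ "{0..<M}"]) (use M in \<open>auto simp: g_def\<close>)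
  then have "card ((\<lambda>x. (f x, g x)) ` Zn n) = (\<Sum>u\<in>f ` Zn n. card (g ` {y \<in> Zn n. f y = u}))"
    unfolding image_pair using fin by (simp add: card_SigmaI)
  also have "\<dots> = card (f ` Zn n) * card G" using card_fibre by simp
  finally show ?thesis by (simp add: g_def G_def)
qed

text \<open>The sublattice is cut out by a congruence on the first coordinate modulo a suitable \<open>M\<close>.\<close>
lemma exists_sublattice_vol_mult:
  assumes f: "diff_compatible n f" and fin: "finite (f ` Zn n)"
    and c: "(\<lambda>i. if i = 0 then c else 0) \<in> zn_kernel n f" "c > 0" and k: "k > 0"
  shows "\<exists>L \<subseteq> zn_kernel n f. is_lattice n L \<and> vol n L = card (f ` Zn n) * k"
proof -
  let ?K = "zn_kernel n f"
  have K: "is_lattice n ?K" by (rule is_lattice_zn_kernel[OF f])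
  have "\<exists>M > 0. card ((\<lambda>s. s mod M) ` (\<lambda>x. x 0) ` ?K) = k"
  proof (rule int_subgroup_card_mod_image[OF _ _ _ c(2) k])
    show "x + y \<in> (\<lambda>x. x 0) ` ?K" if x: "x \<in> (\<lambda>x. x 0) ` ?K" and y: "y \<in> (\<lambda>x. x 0) ` ?K" for x y
    proof -
      obtain u v where uv: "u \<in> ?K" "v \<in> ?K" and "x = u 0" "y = v 0" using x y by blast
      then have "x + y = (u + v) 0" by simp
      moreover have "u + v \<in> ?K" using K uv by (simp add: is_lattice_def)
      ultimately show ?thesis by blast
    qed
    show "a * x \<in> (\<lambda>x. x 0) ` ?K" if x: "x \<in> (\<lambda>x. x 0) ` ?K" for a x
    proof -
      obtain u where "u \<in> ?K" "x = u 0" using x by blast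
      then show ?thesis using is_lattice_scale[OF K, of u a] by (metis image_eqI)
    qed
    show "c \<in> (\<lambda>x. x 0) ` ?K" by (rule rev_image_eqI[OF c(1)]) simp
  qed
  then obtain M where M: "M > 0" "card ((\<lambda>x. x 0 mod M) ` ?K) = k" unfolding image_image by blast
  define f' where "f' x = (f x, x 0 mod M)" for x
  have f': "diff_compatible n f'"
    unfolding diff_compatible_def
  proof (intro ballI)
    fix x y assume "x \<in> Zn n" "y \<in> Zn n"
    then have "f x = f y \<longleftrightarrow> f (x - y) = f 0" by (rule diff_compatibleD[OF f])
    moreover have "x 0 mod M = y 0 mod M \<longleftrightarrow> (x - y) 0 mod M = 0 mod M"
      by (simp add: mod_eq_dvd_iff dvd_eq_mod_eq_0)
    ultimately show "f' x = f' y \<longleftrightarrow> f' (x - y) = f' 0" by (simp add: f'_def)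
  qed
  have "zn_kernel n f' \<subseteq> ?K" by (auto simp: zn_kernel_def f'_def)
  moreover have "vol n (zn_kernel n f') = card (f ` Zn n) * k"
    using vol_zn_kernel[OF f'] card_image_pair_mod[OF f fin M(1)] M(2) by (simp add: f'_def)
  ultimately show ?thesis using is_lattice_zn_kernel[OF f'] by blast
qed

lemma is_lattice_packingI:
  assumes L: "is_lattice n L"
    and no_diff: "\<And>b b'. b \<in> B \<Longrightarrow> b' \<in> B \<Longrightarrow> b' - b \<in> L \<Longrightarrow> b' = b"
  shows "is_lattice_packing n L B"
  unfolding is_lattice_packing_def
proof (intro conjI ballI impI L)
  fix v w assume v: "v \<in> L" and w: "w \<in> L" and "v \<noteq> w"
  show "(\<lambda>b. v + b) ` B \<inter> (\<lambda>b. w + b) ` B = {}"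
  proof (rule ccontr)
    assume "(\<lambda>b. v + b) ` B \<inter> (\<lambda>b. w + b) ` B \<noteq> {}"
    then obtain b b' where b: "b \<in> B" "b' \<in> B" and "v + b = w + b'" by auto
    then have "b' - b = v - w" by (simp add: algebra_simps)
    also have "\<dots> \<in> L" using L v w unfolding is_lattice_def by (metis diff_conv_add_uminus)
    finally show False using no_diff[OF b] \<open>v + b = w + b'\<close> \<open>v \<noteq> w\<close> by simp
  qed
qed

section \<open>Size of the ball\<close>

definition support_vectors :: "nat set \<Rightarrow> 'a set \<Rightarrow> (nat \<Rightarrow> 'a::zero) set" where
  "support_vectors S V = {x. (\<forall>i\<in>S. x i \<in> V) \<and> (\<forall>i. i \<notin> S \<longrightarrow> x i = 0)}"

lemma support_vectors_support: "x \<in> support_vectors S V \<Longrightarrow> 0 \<notin> V \<Longrightarrow> {i. x i \<noteq> 0} = S"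
  unfolding support_vectors_def by force

lemma
  assumes "finite S" "finite V"
  shows finite_support_vectors: "finite (support_vectors S V)"
    and card_support_vectors: "card (support_vectors S V) = card V ^ card S"
proof -
  have inj: "inj_on (\<lambda>x. restrict x S) (support_vectors S V)"
  proof (rule inj_onI, rule ext)
    fix x y i assume x: "x \<in> support_vectors S V" and y: "y \<in> support_vectors S V"
      and eq: "restrict x S = restrict y S"
    show "x i = y i"
    proof (cases "i \<in> S")
      case True
      then show ?thesis using fun_cong[OF eq, of i] by simp
    next
      case False
      then show ?thesis using x y by (simp add: support_vectors_def)
    qed
  qed
  have image: "(\<lambda>x. restrict x S) ` support_vectors S V = PiE S (\<lambda>_. V)"
  proof
    show "(\<lambda>x. restrict x S) ` support_vectors S V \<subseteq> PiE S (\<lambda>_. V)"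
      by (rule image_subsetI) (simp add: restrict_PiE_iff support_vectors_def)
    show "PiE S (\<lambda>_. V) \<subseteq> (\<lambda>x. restrict x S) ` support_vectors S V"
    proof
      fix f assume f: "f \<in> PiE S (\<lambda>_. V)"
      have eq: "restrict (\<lambda>i. if i \<in> S then f i else 0) S = f"
      proof
        fix i show "restrict (\<lambda>i. if i \<in> S then f i else 0) S i = f i"
          by (cases "i \<in> S") (simp_all add: PiE_arb[OF f])
      qed
      have mem: "(\<lambda>i. if i \<in> S then f i else 0) \<in> support_vectors S V"
        using PiE_mem[OF f] by (simp add: support_vectors_def)
      show "f \<in> (\<lambda>x. restrict x S) ` support_vectors S V"
        by (rule image_eqI[where f = "\<lambda>x. restrict x S", OF eq[symmetric] mem])
    qed
  qed
  show "finite (support_vectors S V)" using finite_imageD[OF _ inj] image assms by (simp add: finite_PiE)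
  show "card (support_vectors S V) = card V ^ card S"
    using card_image[OF inj] image assms(1) by (simp add: card_PiE)
qed

lemma ball_B_eq_UN:
  "ball_B n t kp km = (\<Union>S\<in>{S. S \<subseteq> {..<n} \<and> card S \<le> t}. support_vectors S ({- int km..int kp} - {0}))"
proof (intro equalityI subsetI)
  fix x assume "x \<in> ball_B n t kp km"
  then have "{i. i < n \<and> x i \<noteq> 0} \<in> {S. S \<subseteq> {..<n} \<and> card S \<le> t}"
    "x \<in> support_vectors {i. i < n \<and> x i \<noteq> 0} ({- int km..int kp} - {0})"
    by (auto simp: ball_B_def hwt_def Zn_def support_vectors_def)
  then show "x \<in> (\<Union>S\<in>{S. S \<subseteq> {..<n} \<and> card S \<le> t}. support_vectors S ({- int km..int kp} - {0}))"
    by blast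
next
  fix x assume "x \<in> (\<Union>S\<in>{S. S \<subseteq> {..<n} \<and> card S \<le> t}. support_vectors S ({- int km..int kp} - {0}))"
  then obtain S where S: "S \<subseteq> {..<n}" "card S \<le> t" "x \<in> support_vectors S ({- int km..int kp} - {0})"
    by blast
  have "{i. x i \<noteq> 0} = S" using support_vectors_support[OF S(3)] by simp
  then have "{i. i < n \<and> x i \<noteq> 0} = S" using S(1) by blast
  then have "hwt n x \<le> t" using S(2) by (simp add: hwt_def)
  moreover have "x \<in> Zn n" "\<forall>i<n. - int km \<le> x i \<and> x i \<le> int kp"
    using S(1,3) by (auto simp: Zn_def support_vectors_def)
  ultimately show "x \<in> ball_B n t kp km" by (simp add: ball_B_def)
qed

lemma card_ball_B: "card (ball_B n t kp km) = (\<Sum>i\<le>t. (n choose i) * (kp + km) ^ i)"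
proof -
  define V where "V = {- int km..int kp} - {0}"
  define P where "P = {S. S \<subseteq> {..<n} \<and> card S \<le> t}"
  have V: "finite V" "card V = kp + km" "0 \<notin> V" by (simp_all add: V_def card_Diff_singleton)
  have finite_P: "finite P" unfolding P_def by (rule finite_subset[of _ "Pow {..<n}"]) auto
  have P_finite: "finite S" if "S \<in> P" for S using that by (auto simp: P_def intro: finite_subset)
  have "card (ball_B n t kp km) = (\<Sum>S\<in>P. card (support_vectors S V))"
    unfolding ball_B_eq_UN V_def[symmetric] P_def[symmetric]
  proof (intro card_UN_disjoint finite_P ballI impI)
    show "finite (support_vectors S V)" if "S \<in> P" for S using P_finite[OF that] V(1)
      by (rule finite_support_vectors)
    show "support_vectors S V \<inter> support_vectors S' V = {}" if "S \<noteq> S'" for S S'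
      using that support_vectors_support[OF _ V(3)] by blast
  qed
  also have "\<dots> = (\<Sum>S\<in>P. (kp + km) ^ card S)"
    by (intro sum.cong refl) (simp add: card_support_vectors[OF P_finite V(1)] V(2))
  also have "\<dots> = (\<Sum>i\<le>t. \<Sum>S\<in>{S \<in> P. card S = i}. (kp + km) ^ card S)"
    by (rule sum.group[symmetric]) (use finite_P in \<open>auto simp: P_def\<close>)
  also have "\<dots> = (\<Sum>i\<le>t. (n choose i) * (kp + km) ^ i)"
  proof (rule sum.cong)
    fix i assume "i \<in> {..t}"
    then have "{S \<in> P. card S = i} = {S. S \<subseteq> {..<n} \<and> card S = i}" by (auto simp: P_def)
    then show "(\<Sum>S\<in>{S \<in> P. card S = i}. (kp + km) ^ card S) = (n choose i) * (kp + km) ^ i"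
      using n_subsets[of "{..<n}" i] by simp
  qed simp
  finally show ?thesis .
qed

lemma hwt_diff_le: "hwt n (x - y) \<le> hwt n x + hwt n y"
proof -
  have "{i. i < n \<and> (x - y) i \<noteq> 0} \<subseteq> {i. i < n \<and> x i \<noteq> 0} \<union> {i. i < n \<and> y i \<noteq> 0}" by auto
  then have "hwt n (x - y) \<le> card ({i. i < n \<and> x i \<noteq> 0} \<union> {i. i < n \<and> y i \<noteq> 0})"
    unfolding hwt_def by (intro card_mono) auto
  also have "\<dots> \<le> hwt n x + hwt n y" unfolding hwt_def by (rule card_Un_le)
  finally show ?thesis .
qed

lemma ball_B_diff:
  assumes "b \<in> ball_B n t kp km" "b' \<in> ball_B n t kp km"
  shows "b' - b \<in> Zn n" "\<And>i. i < n \<Longrightarrow> \<bar>(b' - b) i\<bar> \<le> int (kp + km)" "hwt n (b' - b) \<le> 2 * t"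
proof -
  have b: "b \<in> Zn n" "hwt n b \<le> t" "\<And>i. i < n \<Longrightarrow> - int km \<le> b i \<and> b i \<le> int kp"
    and b': "b' \<in> Zn n" "hwt n b' \<le> t" "\<And>i. i < n \<Longrightarrow> - int km \<le> b' i \<and> b' i \<le> int kp"
    using assms by (auto simp: ball_B_def)
  show "b' - b \<in> Zn n" using b b' by (simp add: Zn_def)
  show "\<bar>(b' - b) i\<bar> \<le> int (kp + km)" if "i < n" for i using b(3)[OF that] b'(3)[OF that] by auto
  show "hwt n (b' - b) \<le> 2 * t" using hwt_diff_le[of n b' b] b(2) b'(2) by simp
qed

section \<open>Rings of characteristic \<open>p\<close>\<close>

text \<open>\<open>iota\<close> is the canonical homomorphism \<open>\<int> \<rightarrow> R\<close>; its kernel \<open>p\<int>\<close> makes \<open>p\<close> the characteristic.\<close>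
locale cring_char_p = cring R for R (structure) +
  fixes p :: nat and iota :: "int \<Rightarrow> 'a"
  assumes prime_p: "Factorial_Ring.prime p"
    and iota_carrier [simp]: "iota k \<in> carrier R"
    and iota_add: "iota (a + b) = iota a \<oplus> iota b"
    and iota_mult: "iota (a * b) = iota a \<otimes> iota b"
    and iota_one [simp]: "iota 1 = \<one>"
    and iota_eq_zero_iff: "iota k = \<zero> \<longleftrightarrow> int p dvd k"
begin

lemma iota_zero [simp]: "iota 0 = \<zero>"
  using iota_eq_zero_iff by simp

lemma iota_neg: "iota (- a) = \<ominus> iota a"
  using iota_add[of "- a" a] by (simp add: minus_equality)

lemma p_gt_1: "p > 1"
  using prime_p prime_gt_1_nat by blast

lemma binomial_expansion:
  assumes a: "a \<in> carrier R" and b: "b \<in> carrier R"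
  shows "(a \<oplus> b) [^] n = (\<Oplus>k\<in>{..n}. iota (int (n choose k)) \<otimes> (a [^] k \<otimes> b [^] (n - k)))"
proof (induction n)
  case 0
  then show ?case using a b by simp
next
  case (Suc n)
  define T where "T = (\<lambda>k. iota (int (n choose k)) \<otimes> (a [^] k \<otimes> b [^] (n - k)))"
  define U where "U = (\<lambda>k. iota (int (if k = 0 then 0 else n choose (k - 1))) \<otimes> (a [^] k \<otimes> b [^] (Suc n - k)))"
  define V where "V = (\<lambda>k. iota (int (n choose k)) \<otimes> (a [^] k \<otimes> b [^] (Suc n - k)))"
  have T: "T \<in> A \<rightarrow> carrier R" and U: "U \<in> A \<rightarrow> carrier R" and V: "V \<in> A \<rightarrow> carrier R" for A
    using a b by (auto simp: T_def U_def V_def)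
  have "(a \<oplus> b) [^] Suc n = finsum R T {..n} \<otimes> a \<oplus> finsum R T {..n} \<otimes> b"
    using Suc a b T by (simp add: T_def r_distr)
  also have "finsum R T {..n} \<otimes> a = (\<Oplus>k\<in>{..n}. T k \<otimes> a)"
    using T a by (simp add: finsum_ldistr)
  also have "\<dots> = (\<Oplus>k\<in>{..n}. U (Suc k))"
    by (rule finsum_cong') (use a b in \<open>auto simp: T_def U_def m_ac\<close>)
  also have "\<dots> = finsum R U {..Suc n}"
    using finsum_Suc2[of U n] U a b by (simp add: U_def finsum_closed)
  also have "finsum R T {..n} \<otimes> b = (\<Oplus>k\<in>{..n}. T k \<otimes> b)"
    using T b by (simp add: finsum_ldistr)
  also have "\<dots> = (\<Oplus>k\<in>{..n}. V k)"
    by (rule finsum_cong') (use a b in \<open>auto simp: T_def V_def m_ac Suc_diff_le\<close>)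
  also have "\<dots> = finsum R V {..Suc n}"
    using finsum_Suc[of V n] V a b by (simp add: V_def finsum_closed binomial_eq_0)
  also have "finsum R U {..Suc n} \<oplus> finsum R V {..Suc n} = (\<Oplus>k\<in>{..Suc n}. U k \<oplus> V k)"
    using finsum_addf[OF U V] by simp
  also have "\<dots> = (\<Oplus>k\<in>{..Suc n}. iota (int (Suc n choose k)) \<otimes> (a [^] k \<otimes> b [^] (Suc n - k)))"
  proof (rule finsum_cong')
    fix k
    have "int (Suc n choose k) = int (if k = 0 then 0 else n choose (k - 1)) + int (n choose k)"
      by (cases k) auto
    then show "U k \<oplus> V k = iota (int (Suc n choose k)) \<otimes> (a [^] k \<otimes> b [^] (Suc n - k))"
      using a b by (simp add: U_def V_def iota_add l_distr)
  qed (use a b in auto)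
  finally show ?case .
qed

text \<open>All inner binomial coefficients \<open>p choose k\<close> are divisible by \<open>p\<close>.\<close>
lemma frobenius_add:
  assumes a: "a \<in> carrier R" and b: "b \<in> carrier R"
  shows "(a \<oplus> b) [^] p = a [^] p \<oplus> b [^] p"
proof -
  define r where "r = p - 2"
  have p: "p = Suc (Suc r)" using p_gt_1 by (simp add: r_def)
  define f where "f = (\<lambda>k. iota (int (p choose k)) \<otimes> (a [^] k \<otimes> b [^] (p - k)))"
  have f: "f \<in> A \<rightarrow> carrier R" for A using a b by (auto simp: f_def)
  have inner: "f (Suc k) = \<zero>" if "k \<le> r" for k
  proof -
    have "p dvd (p choose Suc k)" using dvd_choose_prime[of "Suc k" p] prime_p that p by auto
    then have "iota (int (p choose Suc k)) = \<zero>" by (simp add: iota_eq_zero_iff)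
    then show ?thesis using a b by (simp add: f_def)
  qed
  have "(a \<oplus> b) [^] p = finsum R f {..Suc (Suc r)}"
    using binomial_expansion[OF a b, of p] by (simp add: f_def p)
  also have "\<dots> = f (Suc (Suc r)) \<oplus> ((\<Oplus>k\<in>{..r}. f (Suc k)) \<oplus> f 0)"
    using finsum_Suc[of f "Suc r"] finsum_Suc2[of f r] f by simp
  also have "(\<Oplus>k\<in>{..r}. f (Suc k)) = (\<Oplus>k\<in>{..r}. \<zero>)"
    by (intro finsum_cong') (auto simp: inner)
  also have "\<dots> = \<zero>" by (rule finsum_zero)
  finally show ?thesis using a b by (simp add: f_def p a_comm)
qed

lemma frobenius_power_add:
  assumes a: "a \<in> carrier R" and b: "b \<in> carrier R"
  shows "(a \<oplus> b) [^] (p ^ e) = a [^] (p ^ e) \<oplus> b [^] (p ^ e)"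
proof (induction e)
  case (Suc e)
  have "(a \<oplus> b) [^] (p ^ Suc e) = ((a \<oplus> b) [^] (p ^ e)) [^] p"
    using a b by (simp add: nat_pow_pow mult.commute)
  also have "\<dots> = (a [^] (p ^ e)) [^] p \<oplus> (b [^] (p ^ e)) [^] p"
    using Suc a b by (simp add: frobenius_add)
  finally show ?case using a b by (simp add: nat_pow_pow mult.commute)
qed (use a b in simp)

lemma frobenius_power_neg:
  assumes a: "a \<in> carrier R"
  shows "(\<ominus> a) [^] (p ^ e) = \<ominus> (a [^] (p ^ e))"
proof -
  have "a [^] (p ^ e) \<oplus> (\<ominus> a) [^] (p ^ e) = \<zero>"
    using frobenius_power_add[of a "\<ominus> a" e] a p_gt_1 by (simp add: r_neg nat_pow_zero)
  then show ?thesis using a by (intro minus_equality[symmetric]) (auto simp: a_comm)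
qed

lemma frobenius_power_minus:
  assumes a: "a \<in> carrier R" and b: "b \<in> carrier R"
  shows "(a \<ominus> b) [^] (p ^ e) = a [^] (p ^ e) \<ominus> b [^] (p ^ e)"
  using frobenius_power_add[of a "\<ominus> b" e] frobenius_power_neg[of b e] a b by (simp add: a_minus_def)

lemma frobenius_power_finsum:
  assumes "finite A" "f \<in> A \<rightarrow> carrier R"
  shows "(finsum R f A) [^] (p ^ e) = (\<Oplus>i\<in>A. f i [^] (p ^ e))"
  using assms
proof (induction A rule: finite_induct)
  case empty
  then show ?case using p_gt_1 by (simp add: nat_pow_zero)
next
  case (insert x F)
  then have "(\<Oplus>i\<in>insert x F. f i [^] (p ^ e)) = f x [^] (p ^ e) \<oplus> (\<Oplus>i\<in>F. f i [^] (p ^ e))"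
    by (intro finsum_insert) auto
  then show ?case using insert by (simp add: finsum_insert frobenius_power_add finsum_closed)
qed

lemma iota_power_p: "iota k [^] p = iota k"
proof -
  have nat: "iota (int k) [^] p = iota (int k)" for k :: nat
  proof (induction k)
    case 0
    then show ?case using p_gt_1 by (simp add: nat_pow_zero)
  next
    case (Suc k)
    have "iota (int (Suc k)) = \<one> \<oplus> iota (int k)" by (simp add: iota_add)
    then show ?case using frobenius_add[of "\<one>" "iota (int k)"] Suc by simp
  qed
  show ?thesis
  proof (cases "k \<ge> 0")
    case True
    then show ?thesis using nat[of "nat k"] by simp
  next
    case False
    then have "k = - int (nat (- k))" by simp
    then have "iota k = \<ominus> iota (int (nat (- k)))" by (metis iota_neg)
    then show ?thesis using frobenius_power_neg[of "iota (int (nat (- k)))" 1] nat[of "nat (- k)"] by simp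
  qed
qed

lemma iota_power_p_power: "iota k [^] (p ^ e) = iota k"
proof (induction e)
  case (Suc e)
  then show ?case using iota_power_p[of k] by (simp add: nat_pow_pow[symmetric] mult.commute)
qed simp

end

lemma (in domain) power_sums_not_all_zero:
  assumes "finite S" "S \<noteq> {}" "inj_on b S"
    and "\<And>i. i \<in> S \<Longrightarrow> b i \<in> carrier R - {\<zero>}"
    and "\<And>i. i \<in> S \<Longrightarrow> c i \<in> carrier R - {\<zero>}"
  shows "\<exists>j \<in> {1..card S}. (\<Oplus>i\<in>S. c i \<otimes> b i [^] j) \<noteq> \<zero>"
  using assms
proof (induction S arbitrary: c rule: finite_ne_induct)
  case (singleton k)
  then have "c k \<otimes> b k [^] (1::nat) \<noteq> \<zero>" by (simp add: integral_iff)
  then show ?case using singleton.prems by auto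
next
  case (insert k S)
  have bk: "b k \<in> carrier R" using insert.prems by auto
  have bc: "b i \<in> carrier R" "c i \<in> carrier R" if "i \<in> insert k S" for i
    using insert.prems that by auto
  show ?case
  proof (rule ccontr)
    assume "\<not> ?case"
    then have sums_zero: "(\<Oplus>i\<in>insert k S. c i \<otimes> b i [^] j) = \<zero>" if "j \<in> {1..card S + 1}" for j
      using that insert.hyps by auto
    text \<open>Eliminate \<open>b k\<close>: the weights \<open>c i (b i - b k)\<close> satisfy the induction hypothesis on \<open>S\<close>.\<close>
    define c' where "c' i = c i \<otimes> (b i \<ominus> b k)" for i
    have c': "c' i \<in> carrier R - {\<zero>}" if i: "i \<in> S" for i
    proof -
      have "b i \<noteq> b k" using insert.prems(1) insert.hyps i by (auto simp: inj_on_def)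
      then have "b i \<ominus> b k \<noteq> \<zero>" using bc[of i] bk i r_right_minus_eq by auto
      then show ?thesis using insert.prems i bk by (auto simp: c'_def integral_iff)
    qed
    obtain j where j: "j \<in> {1..card S}" and nz: "(\<Oplus>i\<in>S. c' i \<otimes> b i [^] j) \<noteq> \<zero>"
      using insert.IH[of c'] insert.prems c' by (auto simp: inj_on_def)
    define g where "g i = c i \<otimes> b i [^] Suc j \<oplus> (\<ominus> b k) \<otimes> (c i \<otimes> b i [^] j)" for i
    have g: "g \<in> insert k S \<rightarrow> carrier R" using bc bk by (auto simp: g_def)
    have c'_g: "c' i \<otimes> b i [^] j = g i" if "i \<in> insert k S" for i
      using bc[OF that] bk
      by (simp add: c'_def g_def a_minus_def r_distr l_distr l_minus r_minus m_ac nat_pow_Suc2)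
    have "g k = \<zero>" using c'_g[of k] bc[of k] by (simp add: c'_def r_neg a_minus_def)
    then have "(\<Oplus>i\<in>S. c' i \<otimes> b i [^] j) = (\<Oplus>i\<in>insert k S. g i)"
      using g c'_g insert.hyps by (simp add: finsum_insert cong: finsum_cong')
    also have "\<dots> = (\<Oplus>i\<in>insert k S. c i \<otimes> b i [^] Suc j) \<oplus> (\<Oplus>i\<in>insert k S. (\<ominus> b k) \<otimes> (c i \<otimes> b i [^] j))"
      unfolding g_def by (rule finsum_addf) (use bc bk in auto)
    also have "(\<Oplus>i\<in>insert k S. (\<ominus> b k) \<otimes> (c i \<otimes> b i [^] j)) = (\<ominus> b k) \<otimes> (\<Oplus>i\<in>insert k S. c i \<otimes> b i [^] j)"
      by (rule finsum_rdistr[symmetric]) (use bc bk insert.hyps in auto)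
    also have "(\<Oplus>i\<in>insert k S. c i \<otimes> b i [^] j) = \<zero>" using sums_zero[of j] j by simp
    also have "(\<Oplus>i\<in>insert k S. c i \<otimes> b i [^] Suc j) = \<zero>" using sums_zero[of "Suc j"] j by simp
    finally show False using nz bk by simp
  qed
qed

section \<open>Finite fields inside an algebraically closed field\<close>

context domain
begin

text \<open>The coefficient list of \<open>X^N - X + c\<close> (meaningful for \<open>N \<ge> 2\<close>).\<close>
definition x_pow_minus_x :: "nat \<Rightarrow> 'a \<Rightarrow> 'a list" where
  "x_pow_minus_x N c = monom \<one> (N - 2) @ [\<ominus> \<one>, c]"

lemma x_pow_minus_x_carrier:
  assumes "c \<in> carrier R"
  shows "x_pow_minus_x N c \<in> carrier (poly_ring R)"
proof -
  have "polynomial (carrier R) (x_pow_minus_x N c)"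
    using assms by (intro polynomialI) (auto simp: x_pow_minus_x_def monom_def)
  then show ?thesis by (simp add: univ_poly_carrier)
qed

lemma degree_x_pow_minus_x: "N \<ge> 2 \<Longrightarrow> degree (x_pow_minus_x N c) = N"
  by (simp add: x_pow_minus_x_def monom_def)

lemma eval_x_pow_minus_x:
  assumes "c \<in> carrier R" "x \<in> carrier R" "N \<ge> 2"
  shows "eval (x_pow_minus_x N c) x = x [^] N \<ominus> x \<oplus> c"
proof -
  have "eval (x_pow_minus_x N c) x = eval (monom \<one> (N - 2)) x \<otimes> x [^] length [\<ominus> \<one>, c] \<oplus> eval [\<ominus> \<one>, c] x"
    unfolding x_pow_minus_x_def using assms by (intro eval_append) (auto simp: monom_def)
  also have "eval (monom \<one> (N - 2)) x = x [^] (N - 2)"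
    using assms by (simp add: eval_monom)
  also have "eval [\<ominus> \<one>, c] x = \<ominus> x \<oplus> c"
    using assms by (simp add: l_minus)
  also have "x [^] (N - 2) \<otimes> x [^] length [\<ominus> \<one>, c] = x [^] N"
  proof -
    have "length [\<ominus> \<one>, c] = 2" by simp
    moreover have "x [^] (N - 2) \<otimes> x [^] (2::nat) = x [^] (N - 2 + 2)"
      using assms by (simp only: nat_pow_mult)
    ultimately show ?thesis using assms by (simp only: le_add_diff_inverse2)
  qed
  finally show ?thesis using assms by (simp add: a_minus_def a_assoc)
qed

end

text \<open>In a finite field \<open>x^N = x\<close> for \<open>N = |R|\<close>, so \<open>X^N - X - 1\<close> would have no root.\<close>
lemma (in algebraically_closed) infinite_carrier: "infinite (carrier L)"
proof
  assume fin: "finite (carrier L)"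
  define N where "N = card (carrier L)"
  have "card {\<zero>, \<one>} \<le> N" unfolding N_def by (rule Finite_Set.card_mono[OF fin]) auto
  then have N: "N \<ge> 2" by simp
  have x_pow_N: "x [^] N = x" if x: "x \<in> carrier L" for x
  proof (cases "x = \<zero>")
    case True
    then show ?thesis using N by (simp add: nat_pow_zero)
  next
    case False
    interpret M: group "Multiplicative_Group.mult_of L" by (rule field_mult_group)
    have "x \<in> carrier (Multiplicative_Group.mult_of L)" using x False by simp
    then have "x [^]\<^bsub>Multiplicative_Group.mult_of L\<^esub> order (Multiplicative_Group.mult_of L)
        = \<one>\<^bsub>Multiplicative_Group.mult_of L\<^esub>"
      by (rule M.pow_order_eq_1)
    then have "x [^] (N - 1) = \<one>"
      using order_mult_of[OF fin] by (simp add: N_def order_def Multiplicative_Group.mult_of_simps)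
    then show ?thesis using x N by (metis Suc_diff_1 l_one less_le_trans nat_pow_Suc pos2)
  qed
  define P where "P = x_pow_minus_x N (\<ominus> \<one>)"
  have P: "P \<in> carrier (poly_ring L)" unfolding P_def by (rule x_pow_minus_x_carrier) simp
  have "size (roots P) = N"
    using roots_over_carrier[OF P] degree_x_pow_minus_x[OF N] by (simp add: splitted_def P_def)
  then have "roots P \<noteq> {#}" using N by auto
  then obtain x where "x \<in># roots P" by blast
  then have x: "x \<in> carrier L" and "eval P x = \<zero>"
    using roots_mem_iff_is_root[OF P] by (auto simp: is_root_def)
  moreover have "eval P x = \<ominus> \<one>"
    using eval_x_pow_minus_x[of "\<ominus> \<one>" x N] x N x_pow_N[OF x] by (simp add: P_def r_neg a_minus_def)
  ultimately show False by simp
qed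

lemma (in algebraically_closed) eval_eq_zero_if_eval_eq_zero_off_point:
  assumes T: "T \<in> carrier (poly_ring L)" and a: "a \<in> carrier L"
    and zero: "\<And>x. x \<in> carrier L \<Longrightarrow> x \<noteq> a \<Longrightarrow> eval T x = \<zero>"
  shows "eval T a = \<zero>"
proof (rule ccontr)
  assume "eval T a \<noteq> \<zero>"
  then have "T \<noteq> []" by auto
  then have "carrier L - {a} \<subseteq> {x. is_root T x}" using zero by (auto simp: is_root_def)
  then have "finite (carrier L - {a})" using finite_number_of_roots[OF T] by (rule finite_subset)
  then show False using infinite_carrier by simp
qed

locale alg_closed_char_p = cring_char_p R p iota + algebraically_closed R
  for R (structure) and p iota
begin

definition GF :: "nat \<Rightarrow> 'a set" where
  "GF e = {x \<in> carrier R. x [^] (p ^ e) = x}"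

lemma p_power_ge_2: "e \<ge> 1 \<Longrightarrow> p ^ e \<ge> 2"
  using p_gt_1 power_increasing[of 1 e p] by simp

lemma frobenius_fixed_translate:
  assumes x: "x \<in> carrier R" and a: "a \<in> carrier R" "a [^] (p ^ e) = a"
  shows "(x \<ominus> a) [^] (p ^ e) \<ominus> (x \<ominus> a) = x [^] (p ^ e) \<ominus> x"
  using frobenius_power_minus[OF x a(1), of e] x a by (simp add: a_minus_def minus_add a_ac r_neg1 r_neg2)

text \<open>Since \<open>X^q - X = (X - a)^q - (X - a)\<close>, a factorisation \<open>X^q - X = (X - a)^2 h\<close> would make
  \<open>T = (X - a) h - ((X - a)^(q-1) - 1)\<close> vanish everywhere except at \<open>a\<close>, where it is \<open>1\<close>.\<close>
lemma square_not_pdivides_x_pow_minus_x: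
  assumes e: "e \<ge> 1" and a: "a \<in> carrier R" "a [^] (p ^ e) = a"
  shows "\<not> ([\<one>, \<ominus> a] [^]\<^bsub>poly_ring R\<^esub> (2::nat)) pdivides x_pow_minus_x (p ^ e) \<zero>"
proof
  define q where "q = p ^ e"
  have q: "q \<ge> 2" using p_power_ge_2[OF e] by (simp add: q_def)
  define lin where "lin = [\<one>, \<ominus> a]"
  have lin: "lin \<in> carrier (poly_ring R)"
    unfolding lin_def using a by (simp add: univ_poly_carrier[symmetric] polynomial_def)
  have eval_lin: "eval lin x = x \<ominus> a" if "x \<in> carrier R" for x
    using that a by (simp add: lin_def a_minus_def)
  assume "([\<one>, \<ominus> a] [^]\<^bsub>poly_ring R\<^esub> (2::nat)) pdivides x_pow_minus_x (p ^ e) \<zero>"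
  then obtain h where h: "h \<in> carrier (poly_ring R)"
    and P_eq: "x_pow_minus_x q \<zero> = (lin [^]\<^bsub>poly_ring R\<^esub> (2::nat)) \<otimes>\<^bsub>poly_ring R\<^esub> h"
    unfolding pdivides_def factor_def lin_def q_def by blast
  have eval_h: "eval h x \<in> carrier R" if "x \<in> carrier R" for x
    using h that by (intro eval_in_carrier) (auto simp: univ_poly_carrier[symmetric] polynomial_def)
  interpret PR: domain "poly_ring R" by (rule univ_poly_is_domain[OF carrier_is_subring])
  define T where "T = lin \<otimes>\<^bsub>poly_ring R\<^esub> h \<ominus>\<^bsub>poly_ring R\<^esub> (lin [^]\<^bsub>poly_ring R\<^esub> (q - 1) \<ominus>\<^bsub>poly_ring R\<^esub> \<one>\<^bsub>poly_ring R\<^esub>)"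
  have T: "T \<in> carrier (poly_ring R)" unfolding T_def using lin h by simp
  have eval_T: "eval T x = (x \<ominus> a) \<otimes> eval h x \<ominus> ((x \<ominus> a) [^] (q - 1) \<ominus> \<one>)"
    and eval_P: "x [^] q \<ominus> x = (x \<ominus> a) \<otimes> ((x \<ominus> a) \<otimes> eval h x)" if x: "x \<in> carrier R" for x
  proof -
    interpret E: ring_hom_cring "poly_ring R" R "\<lambda>f. eval f x"
      by (rule eval_cring_hom[OF carrier_is_subring x])
    show "eval T x = (x \<ominus> a) \<otimes> eval h x \<ominus> ((x \<ominus> a) [^] (q - 1) \<ominus> \<one>)"
      unfolding T_def a_minus_def using lin h eval_lin[OF x] by (simp add: E.ring.hom_nat_pow a_minus_def)
    show "x [^] q \<ominus> x = (x \<ominus> a) \<otimes> ((x \<ominus> a) \<otimes> eval h x)"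
      using eval_x_pow_minus_x[of \<zero> x q] P_eq lin h eval_lin[OF x] x a(1) eval_h[OF x] q
      by (simp add: E.ring.hom_nat_pow numeral_2_eq_2 m_assoc a_minus_def)
  qed
  have "eval T x = \<zero>" if x: "x \<in> carrier R" and "x \<noteq> a" for x
  proof -
    define y where "y = x \<ominus> a"
    have y: "y \<in> carrier R" "y \<noteq> \<zero>" using x a \<open>x \<noteq> a\<close> r_right_minus_eq by (auto simp: y_def)
    have "y \<otimes> (y [^] (q - 1) \<ominus> \<one>) = y [^] q \<ominus> y"
      using y q nat_pow_Suc2[of y "q - 1"] by (simp add: a_minus_def r_distr r_minus)
    also have "\<dots> = x [^] q \<ominus> x" using frobenius_fixed_translate[OF x a] by (simp add: y_def q_def)
    also have "\<dots> = y \<otimes> (y \<otimes> eval h x)" using eval_P[OF x] by (simp add: y_def)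
    finally have "y [^] (q - 1) \<ominus> \<one> = y \<otimes> eval h x"
      using m_lcancel[OF y(2) y(1)] y(1) eval_h[OF x] by simp
    then show ?thesis using eval_T[OF x] y(1) eval_h[OF x] by (simp add: y_def[symmetric] r_right_minus_eq)
  qed
  then have "eval T a = \<zero>" by (rule eval_eq_zero_if_eval_eq_zero_off_point[OF T a(1)])
  moreover have "a \<ominus> a = \<zero>" using a by (simp add: r_right_minus_eq)
  ultimately show False using eval_T[OF a(1)] a eval_h[OF a(1)] q by (simp add: a_minus_def nat_pow_zero)
qed

lemma alg_mult_x_pow_minus_x_le_1:
  assumes e: "e \<ge> 1" and a: "a \<in> carrier R"
  shows "alg_mult (x_pow_minus_x (p ^ e) \<zero>) a \<le> 1"
proof (rule ccontr)
  define P where "P = x_pow_minus_x (p ^ e) \<zero>"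
  have P: "P \<in> carrier (poly_ring R)" unfolding P_def by (rule x_pow_minus_x_carrier) simp
  assume "\<not> alg_mult (x_pow_minus_x (p ^ e) \<zero>) a \<le> 1"
  then have mult: "2 \<le> alg_mult P a" by (simp add: P_def)
  then have "alg_mult P a > 0" by simp
  then have "eval P a = \<zero>" using alg_mult_gt_zero_iff_is_root[OF P] by (simp add: is_root_def)
  moreover have "eval P a = a [^] (p ^ e) \<ominus> a"
    using eval_x_pow_minus_x[of \<zero> a "p ^ e"] a p_power_ge_2[OF e] by (simp add: P_def a_minus_def)
  ultimately have "a [^] (p ^ e) = a" using a r_right_minus_eq by simp
  then show False
    using le_alg_mult_imp_pdivides[OF a P mult] square_not_pdivides_x_pow_minus_x[OF e a] by (simp add: P_def)
qed

lemma card_GF: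
  assumes e: "e \<ge> 1"
  shows "finite (GF e)" "card (GF e) = p ^ e"
proof -
  define q where "q = p ^ e"
  have q: "q \<ge> 2" using p_power_ge_2[OF e] by (simp add: q_def)
  define P where "P = x_pow_minus_x q \<zero>"
  have P: "P \<in> carrier (poly_ring R)" unfolding P_def by (rule x_pow_minus_x_carrier) simp
  have eval_P: "eval P x = x [^] q \<ominus> x" if "x \<in> carrier R" for x
    using eval_x_pow_minus_x[of \<zero> x q] that q by (simp add: P_def a_minus_def)
  have roots: "set_mset (roots P) = GF e"
  proof (intro equalityI subsetI)
    fix x assume "x \<in># roots P"
    then have x: "x \<in> carrier R" and "eval P x = \<zero>"
      using roots_mem_iff_is_root[OF P] by (auto simp: is_root_def)
    then show "x \<in> GF e" using eval_P r_right_minus_eq by (simp add: GF_def q_def)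
  next
    fix x assume "x \<in> GF e"
    then have x: "x \<in> carrier R" and "eval P x = \<zero>"
      using eval_P r_right_minus_eq by (auto simp: GF_def q_def)
    then have "is_root P x" by (simp add: is_root_def P_def x_pow_minus_x_def)
    then show "x \<in># roots P" using roots_mem_iff_is_root[OF P] by simp
  qed
  then show finite: "finite (GF e)" by (metis finite_set_mset)
  have "roots P = mset_set (GF e)"
  proof (rule multiset_eqI)
    fix x
    show "count (roots P) x = count (mset_set (GF e)) x"
    proof (cases "x \<in> GF e")
      case True
      then have "count (roots P) x \<le> 1"
        using alg_mult_eq_count_roots[OF P] alg_mult_x_pow_minus_x_le_1[OF e, of x]
        by (simp add: P_def q_def GF_def)
      moreover have "count (roots P) x > 0" using True roots by simp
      ultimately show ?thesis using True finite by (auto simp: le_Suc_eq count_eq_zero_iff)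
    next
      case False
      then show ?thesis using roots finite by (simp add: count_eq_zero_iff)
    qed
  qed
  then show "card (GF e) = p ^ e"
    using roots_over_carrier[OF P] degree_x_pow_minus_x[OF q] by (simp add: splitted_def P_def q_def)
qed

lemma GF_carrier: "x \<in> GF e \<Longrightarrow> x \<in> carrier R"
  by (simp add: GF_def)

lemma GF_zero: "\<zero> \<in> GF e"
  using p_gt_1 by (simp add: GF_def nat_pow_zero)

lemma GF_add: "x \<in> GF e \<Longrightarrow> y \<in> GF e \<Longrightarrow> x \<oplus> y \<in> GF e"
  by (simp add: GF_def frobenius_power_add)

lemma GF_neg: "x \<in> GF e \<Longrightarrow> \<ominus> x \<in> GF e"
  by (simp add: GF_def frobenius_power_neg)

lemma GF_mult: "x \<in> GF e \<Longrightarrow> y \<in> GF e \<Longrightarrow> x \<otimes> y \<in> GF e"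
  by (simp add: GF_def nat_pow_distrib)

lemma GF_pow:
  assumes "x \<in> GF e"
  shows "x [^] (j::nat) \<in> GF e"
proof -
  have x: "x \<in> carrier R" "x [^] (p ^ e) = x" using assms by (auto simp: GF_def)
  have "(x [^] j) [^] (p ^ e) = (x [^] (p ^ e)) [^] j" using x(1) by (simp add: nat_pow_pow mult.commute)
  then show ?thesis using x by (simp add: GF_def)
qed

lemma GF_iota: "iota k \<in> GF e"
  by (simp add: GF_def iota_power_p_power)

lemma GF_finsum: "finite A \<Longrightarrow> (\<And>i. i \<in> A \<Longrightarrow> f i \<in> GF e) \<Longrightarrow> finsum R f A \<in> GF e"
proof (induction A rule: finite_induct)
  case empty
  then show ?case by (simp add: GF_zero)
next
  case (insert x A)
  then have "f \<in> insert x A \<rightarrow> carrier R" using GF_carrier by blast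
  then have "finsum R f (insert x A) = f x \<oplus> finsum R f A" using insert.hyps by (intro finsum_insert) auto
  then show ?case using insert GF_add by simp
qed

lemma subgroup_GF: "subgroup (GF e) (add_monoid R)"
  using a_group GF_zero by (intro group.subgroupI)
    (auto simp: GF_carrier GF_neg GF_add a_inv_def[symmetric])

section \<open>Syndromes and the packing lattice\<close>

definition syndrome :: "(nat \<Rightarrow> 'a) \<Rightarrow> nat \<Rightarrow> nat \<Rightarrow> (nat \<Rightarrow> int) \<Rightarrow> 'a" where
  "syndrome b n j x = (\<Oplus>i\<in>{..<n}. iota (x i) \<otimes> b i [^] j)"

lemma syndrome_in_GF: "(\<And>i. i < n \<Longrightarrow> b i \<in> GF e) \<Longrightarrow> syndrome b n j x \<in> GF e"
  unfolding syndrome_def by (intro GF_finsum) (auto intro: GF_mult GF_iota GF_pow)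

definition syndrome_map :: "(nat \<Rightarrow> 'a) \<Rightarrow> nat \<Rightarrow> nat set \<Rightarrow> (nat \<Rightarrow> int) \<Rightarrow> nat \<Rightarrow> 'a" where
  "syndrome_map b n J x = (\<lambda>j\<in>J. syndrome b n j x)"

context
  fixes b :: "nat \<Rightarrow> 'a" and n :: nat
  assumes b_carrier: "\<And>i. i < n \<Longrightarrow> b i \<in> carrier R"
begin

lemma syndrome_carrier: "syndrome b n j x \<in> carrier R"
  unfolding syndrome_def using b_carrier by (intro finsum_closed) auto

lemma syndrome_add: "syndrome b n j (x + y) = syndrome b n j x \<oplus> syndrome b n j y"
proof -
  have "syndrome b n j (x + y) = (\<Oplus>i\<in>{..<n}. iota (x i) \<otimes> b i [^] j \<oplus> iota (y i) \<otimes> b i [^] j)"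
    unfolding syndrome_def using b_carrier by (intro finsum_cong') (auto simp: iota_add l_distr)
  also have "\<dots> = syndrome b n j x \<oplus> syndrome b n j y"
    unfolding syndrome_def using b_carrier by (intro finsum_addf) auto
  finally show ?thesis .
qed

lemma syndrome_zero_if_dvd:
  assumes "\<And>i. int p dvd x i"
  shows "syndrome b n j x = \<zero>"
proof -
  have "iota (x i) = \<zero>" for i using assms by (simp add: iota_eq_zero_iff)
  then have "syndrome b n j x = (\<Oplus>i\<in>{..<n}. \<zero>)"
    unfolding syndrome_def using b_carrier by (intro finsum_cong') auto
  then show ?thesis by (simp add: finsum_zero)
qed

lemma syndrome_zero: "syndrome b n j 0 = \<zero>"
  by (rule syndrome_zero_if_dvd) simp

lemma syndrome_neg: "syndrome b n j (- x) = \<ominus> syndrome b n j x"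
  using syndrome_add[of j x "- x"] syndrome_carrier syndrome_zero
  by (simp add: minus_equality[symmetric] a_comm)

lemma syndrome_diff: "syndrome b n j (x - y) = syndrome b n j x \<ominus> syndrome b n j y"
  using syndrome_add[of j x "- y"] syndrome_neg[of j y] by (simp add: a_minus_def)

lemma syndrome_p_mult: "syndrome b n (p * j) x = syndrome b n j x [^] p"
proof -
  have "syndrome b n j x [^] (p ^ 1) = (\<Oplus>i\<in>{..<n}. (iota (x i) \<otimes> b i [^] j) [^] (p ^ 1))"
    unfolding syndrome_def using b_carrier by (intro frobenius_power_finsum) auto
  also have "\<dots> = syndrome b n (p * j) x"
    unfolding syndrome_def using b_carrier
    by (intro finsum_cong') (auto simp: nat_pow_distrib iota_power_p nat_pow_pow mult.commute)
  finally show ?thesis by simp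
qed

lemma syndrome_nonzero_not_dvd:
  "syndrome b n j x \<noteq> \<zero> \<Longrightarrow> j \<ge> 1 \<Longrightarrow> \<exists>j'. 1 \<le> j' \<and> j' \<le> j \<and> \<not> p dvd j' \<and> syndrome b n j' x \<noteq> \<zero>"
proof (induction j rule: less_induct)
  case (less j)
  show ?case
  proof (cases "p dvd j")
    case True
    then obtain j' where j': "j = p * j'" by blast
    then have "1 \<le> j'" using less.prems(2) by (cases j') auto
    moreover have "j' < j" using j' p_gt_1 \<open>1 \<le> j'\<close> by simp
    moreover have "syndrome b n j' x \<noteq> \<zero>"
      using less.prems(1) j' p_gt_1 by (auto simp: syndrome_p_mult nat_pow_zero)
    ultimately obtain j'' where "1 \<le> j''" "j'' \<le> j'" "\<not> p dvd j''" "syndrome b n j'' x \<noteq> \<zero>"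
      using less.IH[of j'] by blast
    then show ?thesis using \<open>j' < j\<close> by (intro exI[of _ j'']) simp
  qed (use less.prems in auto)
qed

lemma syndrome_nonzero:
  assumes b: "inj_on b {..<n}" "\<And>i. i < n \<Longrightarrow> b i \<noteq> \<zero>"
    and d: "d \<in> Zn n" "d \<noteq> 0" "\<And>i. i < n \<Longrightarrow> \<bar>d i\<bar> < int p"
  shows "\<exists>j. 1 \<le> j \<and> j \<le> hwt n d \<and> \<not> p dvd j \<and> syndrome b n j d \<noteq> \<zero>"
proof -
  define S where "S = {i. i < n \<and> d i \<noteq> 0}"
  have "S \<noteq> {}" using d(1,2) by (auto simp: S_def Zn_def fun_eq_iff not_less)
  moreover have "iota (d i) \<in> carrier R - {\<zero>}" if "i \<in> S" for i
  proof -
    have "i < n" "d i \<noteq> 0" using that by (auto simp: S_def)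
    then have "\<not> int p dvd d i" using d(3)[of i] dvd_imp_le_int[of "d i" "int p"] by auto
    then show ?thesis by (simp add: iota_eq_zero_iff)
  qed
  ultimately obtain j where j: "j \<in> {1..card S}" and nz: "(\<Oplus>i\<in>S. iota (d i) \<otimes> b i [^] j) \<noteq> \<zero>"
    using power_sums_not_all_zero[of S b "\<lambda>i. iota (d i)"] b b_carrier
    by (fastforce simp: S_def inj_on_def)
  have "syndrome b n j d = (\<Oplus>i\<in>S. iota (d i) \<otimes> b i [^] j) \<oplus> (\<Oplus>i\<in>{..<n} - S. iota (d i) \<otimes> b i [^] j)"
  proof -
    have "{..<n} = S \<union> ({..<n} - S)" by (auto simp: S_def)
    then show ?thesis unfolding syndrome_def using b_carrier
      by (subst (1) \<open>{..<n} = S \<union> ({..<n} - S)\<close>, intro finsum_Un_disjoint) (auto simp: S_def)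
  qed
  also have "(\<Oplus>i\<in>{..<n} - S. iota (d i) \<otimes> b i [^] j) = (\<Oplus>i\<in>{..<n} - S. \<zero>)"
    using b_carrier by (intro finsum_cong') (auto simp: S_def)
  finally have "syndrome b n j d \<noteq> \<zero>"
    using nz b_carrier by (simp add: finsum_zero S_def finsum_closed)
  then obtain j' where "1 \<le> j'" "j' \<le> j" "\<not> p dvd j'" "syndrome b n j' d \<noteq> \<zero>"
    using syndrome_nonzero_not_dvd[of j d] j by auto
  moreover have "j \<le> hwt n d" using j by (simp add: S_def hwt_def)
  ultimately show ?thesis by (intro exI[of _ j']) simp
qed

lemma zn_kernel_syndrome_map:
  "x \<in> zn_kernel n (syndrome_map b n J) \<longleftrightarrow> x \<in> Zn n \<and> (\<forall>j\<in>J. syndrome b n j x = \<zero>)"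
  using syndrome_zero by (auto simp: zn_kernel_def syndrome_map_def fun_eq_iff)

lemma diff_compatible_syndrome_map: "diff_compatible n (syndrome_map b n J)"
  unfolding diff_compatible_def
proof (intro ballI)
  fix x y :: "nat \<Rightarrow> int"
  have "syndrome b n j x = syndrome b n j y \<longleftrightarrow> syndrome b n j (x - y) = syndrome b n j 0" for j
    by (simp add: syndrome_diff syndrome_zero r_right_minus_eq syndrome_carrier)
  then show "syndrome_map b n J x = syndrome_map b n J y \<longleftrightarrow>
      syndrome_map b n J (x - y) = syndrome_map b n J 0"
    unfolding syndrome_map_def by (auto simp: restrict_def fun_eq_iff)
qed

end

text \<open>The image of the syndrome map is a subgroup of \<open>GF(p^e)^J\<close>, so Lagrange applies.\<close>
lemma card_syndrome_map_image_dvd: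
  assumes b: "\<And>i. i < n \<Longrightarrow> b i \<in> GF e" and J: "finite J"
  shows "card (syndrome_map b n J ` Zn n) dvd card (GF e) ^ card J"
proof -
  have b_carrier: "\<And>i. i < n \<Longrightarrow> b i \<in> carrier R" using b GF_carrier by blast
  define G where "G = product_group J (\<lambda>_. (add_monoid R)\<lparr>carrier := GF e\<rparr>)"
  interpret G: group G
    unfolding G_def by (intro product_group group.subgroup_imp_group[OF a_group subgroup_GF])
  let ?s = "syndrome_map b n J"
  have mult: "?s x \<otimes>\<^bsub>G\<^esub> ?s y = ?s (x + y)" for x y
    using b_carrier by (simp add: G_def syndrome_map_def syndrome_add cong: restrict_cong)
  have one: "\<one>\<^bsub>G\<^esub> = ?s 0"
    using b_carrier by (simp add: G_def syndrome_map_def syndrome_zero)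
  have carrier: "?s x \<in> carrier G" for x
    using b by (simp add: G_def syndrome_map_def syndrome_in_GF)
  have "subgroup (?s ` Zn n) G"
  proof (rule G.subgroupI)
    show "?s ` Zn n \<subseteq> carrier G" using carrier by blast
    show "?s ` Zn n \<noteq> {}" using Zn_closed(1) by blast
  next
    fix h assume "h \<in> ?s ` Zn n"
    then obtain x where x: "x \<in> Zn n" "h = ?s x" by blast
    have "?s (- x) \<otimes>\<^bsub>G\<^esub> h = \<one>\<^bsub>G\<^esub>" using mult[of "- x" x] one x(2) by simp
    then have "inv\<^bsub>G\<^esub> h = ?s (- x)" using carrier x(2) by (intro G.inv_equality) auto
    moreover have "?s (- x) \<in> ?s ` Zn n" using x(1) by (intro imageI Zn_closed(2))
    ultimately show "inv\<^bsub>G\<^esub> h \<in> ?s ` Zn n" by simp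
  next
    fix h h' assume "h \<in> ?s ` Zn n" "h' \<in> ?s ` Zn n"
    then obtain x y where xy: "x \<in> Zn n" "y \<in> Zn n" and "h = ?s x" "h' = ?s y" by blast
    then have "h \<otimes>\<^bsub>G\<^esub> h' = ?s (x + y)" using mult by simp
    moreover have "?s (x + y) \<in> ?s ` Zn n" using xy by (intro imageI Zn_closed(3))
    ultimately show "h \<otimes>\<^bsub>G\<^esub> h' \<in> ?s ` Zn n" by simp
  qed
  then have "card (?s ` Zn n) dvd order G" using G.lagrange by (metis dvd_triv_right)
  moreover have "order G = card (GF e) ^ card J" by (simp add: order_def G_def card_PiE J)
  ultimately show ?thesis by simp
qed

lemma is_lattice_packing_syndrome_kernel:
  fixes kp km t :: nat
  assumes b: "inj_on b {..<n}" "\<And>i. i < n \<Longrightarrow> b i \<in> carrier R - {\<zero>}" and K: "kp + km < p"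
    and L: "is_lattice n L" "L \<subseteq> zn_kernel n (syndrome_map b n {j \<in> {1..2 * t}. \<not> p dvd j})"
  shows "is_lattice_packing n L (ball_B n t kp km)"
proof (rule is_lattice_packingI[OF L(1)])
  have b_carrier: "\<And>i. i < n \<Longrightarrow> b i \<in> carrier R" and b_nonzero: "\<And>i. i < n \<Longrightarrow> b i \<noteq> \<zero>"
    using b(2) by blast+
  fix x y assume xy: "x \<in> ball_B n t kp km" "y \<in> ball_B n t kp km" "y - x \<in> L"
  show "y = x"
  proof (rule ccontr)
    assume "y \<noteq> x"
    then have "y - x \<noteq> 0" by simp
    moreover have "\<bar>(y - x) i\<bar> < int p" if "i < n" for i using ball_B_diff(2)[OF xy(1,2) that] K by simp
    ultimately obtain j where "1 \<le> j" "j \<le> 2 * t" "\<not> p dvd j" "syndrome b n j (y - x) \<noteq> \<zero>"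
      using syndrome_nonzero[OF b_carrier b(1) b_nonzero ball_B_diff(1)[OF xy(1,2)]] ball_B_diff(3)[OF xy(1,2)]
      by (meson order.trans)
    moreover have "y - x \<in> zn_kernel n (syndrome_map b n {j \<in> {1..2 * t}. \<not> p dvd j})"
      using L(2) xy(3) by blast
    ultimately show False by (simp add: zn_kernel_syndrome_map[OF b_carrier])
  qed
qed

lemma exists_packing_lattice:
  fixes m kp km t :: nat
  assumes m: "m \<ge> 1" and K: "kp + km < p"
  defines "n \<equiv> p ^ m - 1" and "J \<equiv> {j \<in> {1..2 * t}. \<not> p dvd j}"
  shows "\<exists>L. is_lattice_packing n L (ball_B n t kp km) \<and> finite (cosets n L) \<and> vol n L = p ^ (m * card J)"
proof -
  have "p ^ m \<ge> 2" using p_power_ge_2[OF m] .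
  then have n: "n \<ge> 1" by (simp add: n_def)
  have "card (GF m - {\<zero>}) = n" using card_GF[OF m] GF_zero by (simp add: n_def card_Diff_singleton)
  then obtain b where "bij_betw b {..<n} (GF m - {\<zero>})"
    using ex_bij_betw_nat_finite[of "GF m - {\<zero>}"] card_GF[OF m] by (auto simp: atLeast0LessThan)
  then have b_inj: "inj_on b {..<n}" and b: "\<And>i. i < n \<Longrightarrow> b i \<in> GF m" "\<And>i. i < n \<Longrightarrow> b i \<noteq> \<zero>"
    by (auto simp: bij_betw_def)
  have b_carrier: "\<And>i. i < n \<Longrightarrow> b i \<in> carrier R" using b GF_carrier by blast
  define f where "f = syndrome_map b n J"
  have f: "diff_compatible n f" unfolding f_def by (rule diff_compatible_syndrome_map[OF b_carrier])
  have "card (f ` Zn n) dvd p ^ (m * card J)"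
    using card_syndrome_map_image_dvd[OF b(1)] card_GF[OF m] by (simp add: f_def J_def power_mult)
  then obtain e where e: "e \<le> m * card J" "card (f ` Zn n) = p ^ e"
    using divides_primepow_nat[OF prime_p] by blast
  then have fin: "finite (f ` Zn n)" using p_gt_1 by (intro card_ge_0_finite) simp
  have p_kernel: "(\<lambda>i. if i = 0 then int p else 0) \<in> zn_kernel n f"
    using n syndrome_zero_if_dvd[OF b_carrier] by (simp add: f_def zn_kernel_syndrome_map[OF b_carrier] Zn_def)
  have pos: "int p > 0" "p ^ (m * card J - e) > 0" using p_gt_1 by simp_all
  obtain L where L: "L \<subseteq> zn_kernel n f" "is_lattice n L" "vol n L = card (f ` Zn n) * p ^ (m * card J - e)"
    using exists_sublattice_vol_mult[OF f fin p_kernel pos] by blast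
  have vol: "vol n L = p ^ (m * card J)" using L(3) e by (simp add: power_add[symmetric])
  then have "finite (cosets n L)" using p_gt_1 by (intro card_ge_0_finite) (simp add: vol_def)
  moreover have "is_lattice_packing n L (ball_B n t kp km)"
    using L(1,2) b_inj b(2) b_carrier K
    by (intro is_lattice_packing_syndrome_kernel[where b = b]) (auto simp: f_def J_def)
  ultimately show ?thesis using vol by blast
qed

end

lemma exists_alg_closed_char_p:
  assumes p: "Factorial_Ring.prime p"
  shows "\<exists>(R :: ((int list \<times> nat) multiset \<Rightarrow> int) ring) iota. alg_closed_char_p R p iota"
proof -
  define R0 where "R0 = residue_ring (int p)"
  interpret R0: residues_prime p R0 using p unfolding R0_def by unfold_locales
  define \<Omega> where "\<Omega> = R0.alg_closure"
  define h :: "int \<Rightarrow> ((int list \<times> nat) multiset \<Rightarrow> int)" where "h = R0.indexed_const"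
  have h: "h \<in> ring_hom R0 \<Omega>" unfolding \<Omega>_def h_def by (rule R0.alg_closureE)
  interpret A: algebraic_closure \<Omega> "h ` carrier R0"
    unfolding \<Omega>_def h_def by (rule R0.alg_closureE)
  have mod_carrier: "k mod int p \<in> carrier R0" for k using R0.mod_in_carrier by simp
  define iota where "iota k = h (k mod int p)" for k
  have "alg_closed_char_p \<Omega> p iota"
  proof (intro alg_closed_char_p.intro cring_char_p.intro cring_char_p_axioms.intro
      algebraically_closed.intro algebraically_closed_axioms.intro A.is_cring A.field_axioms
      A.roots_over_carrier p)
    show "iota k \<in> carrier \<Omega>" for k unfolding iota_def using h mod_carrier by (rule ring_hom_closed)
    show "iota (a + b) = iota a \<oplus>\<^bsub>\<Omega>\<^esub> iota b" for a b
      unfolding iota_def using ring_hom_add[OF h mod_carrier mod_carrier] by (simp add: R0.add_cong)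
    show "iota (a * b) = iota a \<otimes>\<^bsub>\<Omega>\<^esub> iota b" for a b
      unfolding iota_def using ring_hom_mult[OF h mod_carrier mod_carrier] by (simp add: R0.mult_cong)
    show "iota 1 = \<one>\<^bsub>\<Omega>\<^esub>"
      using ring_hom_one[OF h] prime_gt_1_nat[OF p] by (simp add: iota_def R0.res_one_eq)
    show "iota k = \<zero>\<^bsub>\<Omega>\<^esub> \<longleftrightarrow> int p dvd k" for k
    proof -
      have "inj_on h (carrier R0)" by (rule non_trivial_field_hom_is_inj[OF h R0.is_field A.field_axioms])
      moreover have "h \<zero>\<^bsub>R0\<^esub> = \<zero>\<^bsub>\<Omega>\<^esub>" by (rule ring_hom_zero[OF h R0.ring_axioms A.ring_axioms])
      ultimately have "iota k = \<zero>\<^bsub>\<Omega>\<^esub> \<longleftrightarrow> k mod int p = \<zero>\<^bsub>R0\<^esub>"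
        unfolding iota_def using mod_carrier by (metis R0.zero_closed inj_on_eq_iff)
      then show ?thesis by (simp add: R0.res_zero_eq dvd_eq_mod_eq_0)
    qed
  qed
  then show ?thesis by blast
qed

section \<open>The density\<close>

lemma psi: "Factorial_Ring.prime (psi x)" "x \<le> psi x"
proof -
  obtain q where "Factorial_Ring.prime q" "x < q" using bigger_prime by blast
  then have "Factorial_Ring.prime q \<and> x \<le> q" by simp
  then have "Factorial_Ring.prime (psi x) \<and> x \<le> psi x" unfolding psi_def by (rule LeastI)
  then show "Factorial_Ring.prime (psi x)" "x \<le> psi x" by blast+
qed

lemma card_multiples_atLeastAtMost:
  assumes "p > (0::nat)"
  shows "card {j \<in> {1..N}. p dvd j} = N div p"
proof -
  have "{j \<in> {1..N}. p dvd j} = (\<lambda>k. p * k) ` {1..N div p}"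
  proof (intro equalityI subsetI)
    fix j assume j: "j \<in> {j \<in> {1..N}. p dvd j}"
    then obtain k where k: "j = p * k" by blast
    then have "1 \<le> k" "k \<le> N div p"
      using j assms by (auto simp: less_eq_div_iff_mult_less_eq mult.commute intro: Suc_leI)
    then show "j \<in> (\<lambda>k. p * k) ` {1..N div p}" using k by auto
  next
    fix j assume "j \<in> (\<lambda>k. p * k) ` {1..N div p}"
    then obtain k where k: "1 \<le> k" "k \<le> N div p" "j = p * k" by auto
    then have "p * k \<le> N" by (metis div_le_mono2 le_refl less_eq_div_iff_mult_less_eq assms mult.commute)
    then show "j \<in> {j \<in> {1..N}. p dvd j}" using k assms by (auto intro: order.trans[OF _ mult_le_mono1])
  qed
  moreover have "inj_on (\<lambda>k. p * k) {1..N div p}" using assms by (intro inj_onI) simp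
  ultimately show ?thesis by (simp add: card_image)
qed

lemma card_non_multiples_atLeastAtMost:
  assumes "p > (0::nat)"
  shows "card {j \<in> {1..N}. \<not> p dvd j} = N - N div p"
proof -
  have "{j \<in> {1..N}. \<not> p dvd j} = {1..N} - {j \<in> {1..N}. p dvd j}" by auto
  moreover have "card ({1..N} - {j \<in> {1..N}. p dvd j}) = card {1..N} - card {j \<in> {1..N}. p dvd j}"
    by (rule card_Diff_subset) auto
  ultimately show ?thesis using card_multiples_atLeastAtMost[OF assms, of N] by simp
qed

lemma nat_ceiling_times_one_minus_inverse:
  assumes "p > (0::nat)"
  shows "nat \<lceil>2 * real t * (1 - 1 / real p)\<rceil> = 2 * t - 2 * t div p"
proof -
  have "2 * real t * (1 - 1 / real p) = - (real (2 * t) / real p) + real_of_int (int (2 * t))"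
    by (simp add: algebra_simps)
  then have "\<lceil>2 * real t * (1 - 1 / real p)\<rceil> = - \<lfloor>real (2 * t) / real p\<rfloor> + int (2 * t)"
    by (simp only: ceiling_add_of_int ceiling_minus)
  also have "\<lfloor>real (2 * t) / real p\<rfloor> = int (2 * t div p)" by (rule floor_divide_of_nat_eq)
  finally show ?thesis by simp
qed

theorem corollary2:
  fixes kp km m t :: nat
  assumes "km \<le> kp"
    and "m > 0" and "t > 0"
    and "2 * int t \<le> int (psi (kp + km + 1)) ^ nat \<lceil>real m / 2\<rceil> - 2"
  shows "\<exists>L. is_lattice_packing (psi (kp + km + 1) ^ m - 1) L
                 (ball_B (psi (kp + km + 1) ^ m - 1) t kp km)
            \<and> finite (cosets (psi (kp + km + 1) ^ m - 1) L)
            \<and> density (psi (kp + km + 1) ^ m - 1) L (ball_B (psi (kp + km + 1) ^ m - 1) t kp km)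
              = (\<Sum>i\<le>t. real ((psi (kp + km + 1) ^ m - 1) choose i) * real (kp + km) ^ i)
                / real (psi (kp + km + 1) ^ m) ^ nat \<lceil>2 * real t * (1 - 1 / real (psi (kp + km + 1)))\<rceil>"
proof -
  define p where "p = psi (kp + km + 1)"
  define n where "n = p ^ m - 1"
  have p: "Factorial_Ring.prime p" "kp + km < p" using psi[of "kp + km + 1"] by (auto simp: p_def)
  then have "p > 0" by (simp add: prime_gt_0_nat)
  obtain R :: "((int list \<times> nat) multiset \<Rightarrow> int) ring" and iota where "alg_closed_char_p R p iota"
    using exists_alg_closed_char_p[OF p(1)] by blast
  then obtain L where L: "is_lattice_packing n L (ball_B n t kp km)" "finite (cosets n L)"
      "vol n L = p ^ (m * card {j \<in> {1..2 * t}. \<not> p dvd j})"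
    using alg_closed_char_p.exists_packing_lattice[of R p iota m kp km t] assms(2) p(2) by (auto simp: n_def)
  have "real (vol n L) = real (p ^ m) ^ nat \<lceil>2 * real t * (1 - 1 / real p)\<rceil>"
    using L(3) card_non_multiples_atLeastAtMost[OF \<open>p > 0\<close>] nat_ceiling_times_one_minus_inverse[OF \<open>p > 0\<close>]
    by (simp add: power_mult)
  then have "density n L (ball_B n t kp km)
      = (\<Sum>i\<le>t. real (n choose i) * real (kp + km) ^ i) / real (p ^ m) ^ nat \<lceil>2 * real t * (1 - 1 / real p)\<rceil>"
    by (simp add: density_def card_ball_B)
  then show ?thesis using L unfolding p_def[symmetric] n_def by blast
qed

end
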